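(* For every compatible connection $\nabla=(\nabla_1,\dots,\nabla_N)$ on $\mathfrak{H}_n^\infty$, the operators $\nabla_1,\dots,\nabla_N$ extend to skew-adjoint (unbounded) operators on $\mathfrak{H}_n$ with domains $\mathcal{D}(D_1),\dots,\mathcal{D}(D_N)$, respectively.
   Context: $\theta$ is a real antisymmetric $N\times N$ matrix; $\mathcal{A}_\theta$ is the universal $C^*$-algebra generated by unitaries $u_1,\dots,u_N$ with $u_ku_l=\exp(2\pi i\theta_{kl})u_lu_k$; $\mathcal{A}_\theta^\infty$ is its smooth part for the torus action $\sigma_z(u^\alpha)=z^\alpha u^\alpha$, with derivations $\delta_ku_l=i\delta_{kl}u_l$ acting entrywise on matrices as $\delta_k^{(n)}$. $\mathfrak{H}_n=L^2(\mathcal{A}_\theta\otimes\mathbb{M}_n(\mathbb{C}),\tau\otimes\mathrm{tr})$ ($\tau(\sum c_\alpha u^\alpha)=c_0$, $\mathrm{tr}$ the normalized matrix trace), identified with $L^2(\mathbb{T}^N)\otimes\mathbb{M}_n(\mathbb{C})$ via $u^\alpha\mapsto z^\alpha$; $\eta$ is the canonical embedding, $\mathfrak{H}_n^\infty=\eta(\mathbb{M}_n(\mathcal{A}_\theta^\infty))$, $D_k\eta(x)=\eta(\delta_k^{(n)}x)$ (the usual partial derivative), and $\pi(a)\eta(x)=\eta(ax)$. $\mathcal{D}(D_k)$ is the span of $f\otimes m$ with $(\alpha_k\hat f(\alpha))_\alpha\in\ell^2(\mathbb{Z}^N)$ ($\hat f$ the Fourier transform), on which $D_k$ is skew-adjoint.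 A connection on $\mathfrak{H}_n^\infty$ is an $N$-tuple of linear maps $\nabla_k$ with $\nabla_k(\xi a)=(\nabla_k\xi)a+\xi\delta_k^{(n)}(a)$, compatible with the inner product $(x,y)\mapsto x^*y$ in the sense $(\nabla_kx)^*y+x^*\nabla_ky=\delta_k^{(n)}(x^*y)$. *)

theory Defs
  imports "HOL-Analysis.Analysis"
begin

text \<open>A multi-index \<alpha> \<in> Z^N is a function nat \<Rightarrow> int vanishing
  from N on.  An element of M_n(A_theta) (or of H_n) is represented by its Fourier
  coefficient function \<alpha> \<mapsto> c_\<alpha> \<in> M_n(C), i.e. x = sum c_\<alpha> u^\<alpha>,
  with u^\<alpha> = u_1^{\<alpha>_1} ... u_N^{\<alpha>_N}.\<close>

type_synonym 'n coeffs = "(nat \<Rightarrow> int) \<Rightarrow> complex^'n^'n"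

definition Zn :: "nat \<Rightarrow> (nat \<Rightarrow> int) set" where
  "Zn N = {\<alpha>. \<forall>k\<ge>N. \<alpha> k = 0}"

definition mscale :: "complex \<Rightarrow> complex^'n::finite^'n \<Rightarrow> complex^'n^'n" where
  "mscale c M = (\<chi> i j. c * M$i$j)"

definition madj :: "complex^'n::finite^'n \<Rightarrow> complex^'n^'n" where
  "madj M = (\<chi> i j. cnj (M$j$i))"

definition cadd :: "'n::finite coeffs \<Rightarrow> 'n coeffs \<Rightarrow> 'n coeffs" where
  "cadd f g = (\<lambda>\<alpha>. f \<alpha> + g \<alpha>)"

definition csub :: "'n::finite coeffs \<Rightarrow> 'n coeffs \<Rightarrow> 'n coeffs" where
  "csub f g = (\<lambda>\<alpha>. f \<alpha> - g \<alpha>)"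

definition csmul :: "complex \<Rightarrow> 'n::finite coeffs \<Rightarrow> 'n coeffs" where
  "csmul c f = (\<lambda>\<alpha>. mscale c (f \<alpha>))"

text \<open>Commutation phase: u^\<alpha> u^\<beta> = omega(\<alpha>,\<beta>) u^{\<alpha>+\<beta>}.\<close>
definition omega :: "(nat \<Rightarrow> nat \<Rightarrow> real) \<Rightarrow> nat \<Rightarrow> (nat \<Rightarrow> int) \<Rightarrow> (nat \<Rightarrow> int) \<Rightarrow> complex" where
  "omega \<theta> N \<alpha> \<beta> = exp (2 * pi * \<i> *
      of_real (\<Sum>k<N. \<Sum>l<k. of_int (\<alpha> k) * of_int (\<beta> l) * \<theta> k l))"

text \<open>Product in M_n(A_theta^infinity) (twisted convolution with matrix product).\<close>
definition tw_mult :: "(nat \<Rightarrow> nat \<Rightarrow> real) \<Rightarrow> nat \<Rightarrow> 'n::finite coeffs \<Rightarrow> 'n::finite coeffs \<Rightarrow> 'n coeffs" where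
  "tw_mult \<theta> N x y = (\<lambda>\<gamma>. if \<gamma> \<in> Zn N then
      infsum (\<lambda>\<alpha>. mscale (omega \<theta> N \<alpha> (\<gamma> - \<alpha>)) (x \<alpha> ** y (\<gamma> - \<alpha>))) (Zn N) else 0)"

text \<open>Involution: (c u^\<beta>)^* = c^* conj(omega(\<beta>,-\<beta>)) u^{-\<beta>}.\<close>
definition tw_star :: "(nat \<Rightarrow> nat \<Rightarrow> real) \<Rightarrow> nat \<Rightarrow> 'n::finite coeffs \<Rightarrow> 'n coeffs" where
  "tw_star \<theta> N x = (\<lambda>\<alpha>. if \<alpha> \<in> Zn N then
      mscale (cnj (omega \<theta> N (- \<alpha>) \<alpha>)) (madj (x (- \<alpha>))) else 0)"

definition deriv :: "nat \<Rightarrow> 'n::finite coeffs \<Rightarrow> 'n coeffs" where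
  "deriv k x = (\<lambda>\<alpha>. mscale (\<i> * of_int (\<alpha> k)) (x \<alpha>))"

text \<open>M_n(A_theta^infinity) = H_n^infinity (eta is the identity in this model):
  rapidly decreasing coefficient functions.\<close>
definition smooth :: "nat \<Rightarrow> 'n::finite coeffs set" where
  "smooth N = {f. (\<forall>\<alpha>. \<alpha> \<notin> Zn N \<longrightarrow> f \<alpha> = 0) \<and>
     (\<forall>p::nat. \<exists>C. \<forall>\<alpha>\<in>Zn N. (1 + (\<Sum>k<N. \<bar>real_of_int (\<alpha> k)\<bar>)) ^ p * norm (f \<alpha>) \<le> C)}"

text \<open>H_n = L^2(T^N) \<otimes> M_n(C) = l^2(Z^N, M_n(C)) via Fourier transform.\<close>
definition ell2 :: "nat \<Rightarrow> 'n::finite coeffs set" where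
  "ell2 N = {f. (\<forall>\<alpha>. \<alpha> \<notin> Zn N \<longrightarrow> f \<alpha> = 0) \<and> (\<lambda>\<alpha>. (norm (f \<alpha>))\<^sup>2) summable_on Zn N}"

text \<open>Inner product (tau \<otimes> tr)(x^* y), tr the normalized trace.\<close>
definition hs_ip :: "nat \<Rightarrow> 'n::finite coeffs \<Rightarrow> 'n coeffs \<Rightarrow> complex" where
  "hs_ip N f g = (\<Sum>\<^sub>\<infinity>\<alpha>\<in>Zn N. \<Sum>i\<in>UNIV. \<Sum>j\<in>UNIV. cnj (f \<alpha> $ i $ j) * g \<alpha> $ i $ j)
                 / of_nat CARD('n)"

definition domD :: "nat \<Rightarrow> nat \<Rightarrow> 'n::finite coeffs set" where
  "domD N k = {f \<in> ell2 N. (\<lambda>\<alpha>. of_int (\<alpha> k) *\<^sub>R f \<alpha>) \<in> ell2 N}"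

definition is_connection ::
  "(nat \<Rightarrow> nat \<Rightarrow> real) \<Rightarrow> nat \<Rightarrow> (nat \<Rightarrow> 'n::finite coeffs \<Rightarrow> 'n coeffs) \<Rightarrow> bool" where
  "is_connection \<theta> N nab \<longleftrightarrow> (\<forall>k<N.
     (\<forall>x\<in>smooth N. nab k x \<in> smooth N) \<and>
     (\<forall>x\<in>smooth N. \<forall>y\<in>smooth N. nab k (cadd x y) = cadd (nab k x) (nab k y)) \<and>
     (\<forall>c. \<forall>x\<in>smooth N. nab k (csmul c x) = csmul c (nab k x)) \<and>
     (\<forall>\<xi>\<in>smooth N. \<forall>a\<in>smooth N.
        nab k (tw_mult \<theta> N \<xi> a) = cadd (tw_mult \<theta> N (nab k \<xi>) a) (tw_mult \<theta> N \<xi> (deriv k a))))"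

definition is_compatible ::
  "(nat \<Rightarrow> nat \<Rightarrow> real) \<Rightarrow> nat \<Rightarrow> (nat \<Rightarrow> 'n::finite coeffs \<Rightarrow> 'n coeffs) \<Rightarrow> bool" where
  "is_compatible \<theta> N nab \<longleftrightarrow> (\<forall>k<N. \<forall>x\<in>smooth N. \<forall>y\<in>smooth N.
     cadd (tw_mult \<theta> N (tw_star \<theta> N (nab k x)) y) (tw_mult \<theta> N (tw_star \<theta> N x) (nab k y))
       = deriv k (tw_mult \<theta> N (tw_star \<theta> N x) y))"

text \<open>Skew-adjoint unbounded operator T with domain Dm in the Hilbert space H:
  densely defined, linear, and T^* = -T (adjoint domain equals Dm).\<close>
definition skew_adjoint ::
  "'n::finite coeffs set \<Rightarrow> ('n coeffs \<Rightarrow> 'n coeffs \<Rightarrow> complex) \<Rightarrow> 'n coeffs set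
     \<Rightarrow> ('n coeffs \<Rightarrow> 'n coeffs) \<Rightarrow> bool" where
  "skew_adjoint H ip Dm T \<longleftrightarrow>
     Dm \<subseteq> H \<and> (\<forall>x\<in>Dm. T x \<in> H) \<and>
     (\<forall>x\<in>Dm. \<forall>y\<in>Dm. cadd x y \<in> Dm \<and> T (cadd x y) = cadd (T x) (T y)) \<and>
     (\<forall>c. \<forall>x\<in>Dm. csmul c x \<in> Dm \<and> T (csmul c x) = csmul c (T x)) \<and>
     (\<forall>f\<in>H. \<forall>e>0. \<exists>g\<in>Dm. Re (ip (csub f g) (csub f g)) < e\<^sup>2) \<and>
     (\<forall>y\<in>H. (\<exists>z\<in>H. \<forall>x\<in>Dm. ip (T x) y = ip x z) \<longleftrightarrow> y \<in> Dm) \<and>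
     (\<forall>x\<in>Dm. \<forall>y\<in>Dm. ip (T x) y = - ip x (T y))"

end

theory Submission
  imports Defs "HOL-Library.Function_Algebras"
begin

text \<open>
  Fix \<open>k\<close> and put \<open>a = \<nabla>\<^sub>k(1)\<close>. The Leibniz rule with \<open>\<xi> = 1\<close> gives
  \<open>\<nabla>\<^sub>k x = a x + \<delta>\<^sub>k x\<close> on smooth elements, and compatibility with \<open>x = y = 1\<close>
  gives \<open>a\<^sup>* = -a\<close>. In the Fourier picture \<open>\<delta>\<^sub>k\<close> multiplies the coefficient at
  \<open>\<alpha>\<close> by \<open>i \<alpha>\<^sub>k\<close>, which is skew-adjoint on \<open>\<D>(D\<^sub>k)\<close>: finitely supported sequences are
  dense, and the adjoint relation tested on them forces \<open>(\<alpha>\<^sub>k x\<^sub>\<alpha>)\<close> to be square summable.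
  Since \<open>a\<close> is smooth, its coefficients are absolutely summable, so left multiplication by
  \<open>a\<close> is defined on all of \<open>\<H>\<^sub>n\<close> (Young's inequality for the twisted convolution), and
  \<open>a\<^sup>* = -a\<close> makes it skew-symmetric. Adding an everywhere defined skew-symmetric operator
  to a skew-adjoint one preserves skew-adjointness and the domain.
\<close>

lemma le_one_plus_square: "(t::real) \<le> 1 + t\<^sup>2"
proof (cases "t \<ge> 0")
  case True
  then show ?thesis using sum_squares_bound[of 1 t] by simp
qed (simp add: add_nonneg_nonneg order_trans[of t 0])

lemma infsum_weighted_Cauchy_Schwarz:
  fixes w t :: "'a \<Rightarrow> real"
  assumes w: "w summable_on A" and wt2: "(\<lambda>x. w x * (t x)\<^sup>2) summable_on A"
    and w_nonneg: "\<And>x. x \<in> A \<Longrightarrow> w x \<ge> 0" and t_nonneg: "\<And>x. x \<in> A \<Longrightarrow> t x \<ge> 0"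
  shows "(\<lambda>x. w x * t x) summable_on A"
    and "(infsum (\<lambda>x. w x * t x) A)\<^sup>2 \<le> infsum w A * infsum (\<lambda>x. w x * (t x)\<^sup>2) A"
proof -
  have "w x * t x \<le> w x + w x * (t x)\<^sup>2" if "x \<in> A" for x
  proof -
    have "w x * t x \<le> w x * (1 + (t x)\<^sup>2)"
      by (rule mult_left_mono[OF le_one_plus_square w_nonneg[OF that]])
    then show ?thesis by (simp add: distrib_left)
  qed
  then show summable: "(\<lambda>x. w x * t x) summable_on A"
    by (intro summable_on_comparison_test[OF summable_on_add[OF w wt2]])
       (auto intro: mult_nonneg_nonneg w_nonneg t_nonneg)
  define W S where "W = infsum w A" and "S = infsum (\<lambda>x. w x * (t x)\<^sup>2) A"
  have "sum (\<lambda>x. w x * t x) F \<le> sqrt (W * S)" if F: "finite F" "F \<subseteq> A" for F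
  proof -
    have "(sum (\<lambda>x. w x * t x) F)\<^sup>2 = (\<Sum>x\<in>F. sqrt (w x) * (sqrt (w x) * t x))\<^sup>2"
      using F w_nonneg by (intro arg_cong[where f="\<lambda>s. s\<^sup>2"] sum.cong) (auto simp flip: mult.assoc)
    also have "\<dots> \<le> (\<Sum>x\<in>F. (sqrt (w x))\<^sup>2) * (\<Sum>x\<in>F. (sqrt (w x) * t x)\<^sup>2)"
      by (rule Cauchy_Schwarz_ineq_sum)
    also have "\<dots> = sum w F * sum (\<lambda>x. w x * (t x)\<^sup>2) F"
      using F w_nonneg by (intro arg_cong2[where f="(*)"] sum.cong) (auto simp: power_mult_distrib)
    also have "\<dots> \<le> W * S"
      unfolding W_def S_def using F w_nonneg t_nonneg
      by (intro mult_mono finite_sum_le_infsum w wt2 sum_nonneg infsum_nonneg) auto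
    finally show ?thesis by (rule real_le_rsqrt)
  qed
  then have "infsum (\<lambda>x. w x * t x) A \<le> sqrt (W * S)"
    by (rule infsum_le_finite_sums[OF summable])
  moreover have "infsum (\<lambda>x. w x * t x) A \<ge> 0"
    using w_nonneg t_nonneg by (intro infsum_nonneg) auto
  moreover have "W * S \<ge> 0"
    unfolding W_def S_def using w_nonneg t_nonneg by (intro mult_nonneg_nonneg infsum_nonneg) auto
  ultimately show "(infsum (\<lambda>x. w x * t x) A)\<^sup>2 \<le> W * S"
    by (metis power_mono real_sqrt_pow2)
qed

lemma infsum_bounded_linear:
  assumes "bounded_linear h" "f summable_on A"
  shows "infsum (\<lambda>x. h (f x)) A = h (infsum f A)"
  by (rule infsumI, rule has_sum_bounded_linear[OF assms(1) has_sum_infsum[OF assms(2)]])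

lemma summable_on_product_nonneg:
  fixes u v :: "_ \<Rightarrow> real"
  assumes "u summable_on A" "v summable_on B" "\<And>x. x \<in> A \<Longrightarrow> u x \<ge> 0" "\<And>y. y \<in> B \<Longrightarrow> v y \<ge> 0"
  shows "(\<lambda>(x, y). u x * v y) summable_on A \<times> B"
proof -
  have "(\<lambda>p. u (fst p) * v (snd p)) summable_on Sigma A (\<lambda>_. B)"
  proof (rule summable_on_SigmaI[where g="\<lambda>x. u x * infsum v B"])
    show "((\<lambda>y. u (fst (x, y)) * v (snd (x, y))) has_sum u x * infsum v B) B" for x
      using has_sum_cmult_right[OF has_sum_infsum[OF assms(2)], of "u x"] by simp
  qed (use assms in \<open>auto intro: summable_on_cmult_left\<close>)
  then show ?thesis by (simp add: case_prod_unfold)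
qed

section \<open>The Frobenius inner product\<close>

definition frob_inner :: "complex^'n::finite^'n \<Rightarrow> complex^'n^'n \<Rightarrow> complex" where
  "frob_inner M P = (\<Sum>i\<in>UNIV. \<Sum>j\<in>UNIV. cnj (M$i$j) * P$i$j)"

lemma power2_norm_matrix:
  "(norm (M::complex^'m::finite^'n::finite))\<^sup>2 = (\<Sum>i\<in>UNIV. \<Sum>j\<in>UNIV. (cmod (M$i$j))\<^sup>2)"
  by (simp add: norm_vec_def L2_set_def sum_nonneg)

lemma frob_inner_self: "frob_inner M M = of_real ((norm M)\<^sup>2)"
proof -
  have "frob_inner M M = (\<Sum>i\<in>UNIV. \<Sum>j\<in>UNIV. of_real ((cmod (M$i$j))\<^sup>2))"
    unfolding frob_inner_def by (intro sum.cong refl) (metis complex_norm_square mult.commute)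
  then show ?thesis by (simp add: power2_norm_matrix)
qed

lemma norm_frob_inner_le: "cmod (frob_inner M P) \<le> norm M * norm P"
proof -
  have "cmod (frob_inner M P) \<le> (\<Sum>i\<in>UNIV. \<Sum>j\<in>UNIV. cmod (M$i$j) * cmod (P$i$j))"
    unfolding frob_inner_def
    by (rule order_trans[OF norm_sum sum_mono], rule order_trans[OF norm_sum sum_mono])
       (simp add: norm_mult)
  also have "\<dots> \<le> (\<Sum>i\<in>UNIV. norm (M$i) * norm (P$i))"
    using L2_set_mult_ineq[of "\<lambda>j. cmod (M$_$j)" "\<lambda>j. cmod (P$_$j)" UNIV]
    by (intro sum_mono) (simp add: norm_vec_def)
  also have "\<dots> \<le> norm M * norm P"
    using L2_set_mult_ineq[of "\<lambda>i. norm (M$i)" "\<lambda>i. norm (P$i)" UNIV]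
    by (simp add: norm_vec_def)
  finally show ?thesis .
qed

lemma frob_inner_add_left: "frob_inner (P + Q) M = frob_inner P M + frob_inner Q M"
  unfolding frob_inner_def by (simp add: distrib_right sum.distrib)

lemma frob_inner_add_right: "frob_inner M (P + Q) = frob_inner M P + frob_inner M Q"
  unfolding frob_inner_def by (simp add: distrib_left sum.distrib)

lemma frob_inner_diff_right: "frob_inner M (P - Q) = frob_inner M P - frob_inner M Q"
  unfolding frob_inner_def by (simp add: right_diff_distrib sum_subtractf)

lemma frob_inner_mscale_left: "frob_inner (mscale c M) P = cnj c * frob_inner M P"
  unfolding frob_inner_def mscale_def by (simp add: sum_distrib_left algebra_simps)

lemma frob_inner_mscale_right: "frob_inner M (mscale c P) = c * frob_inner M P"
  unfolding frob_inner_def mscale_def by (simp add: sum_distrib_left algebra_simps)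

lemma frob_inner_eqI:
  assumes "\<And>E. frob_inner E P = frob_inner E Q"
  shows "P = Q"
proof -
  have "frob_inner (P - Q) (P - Q) = 0"
    using assms[of "P - Q"] by (simp add: frob_inner_diff_right)
  then show ?thesis by (simp add: frob_inner_self)
qed

lemma mscale_of_real: "mscale (of_real r) M = r *\<^sub>R M"
  by (simp add: mscale_def vec_eq_iff) (simp add: scaleR_conv_of_real)

lemma mscale_add: "mscale c (P + Q) = mscale c P + mscale c Q"
  unfolding mscale_def by (simp add: vec_eq_iff distrib_left)

lemma mscale_zero [simp]: "mscale c 0 = 0"
  by (simp add: mscale_def vec_eq_iff)

lemma mscale_one [simp]: "mscale 1 M = M"
  by (simp add: mscale_def vec_eq_iff)

lemma madj_zero [simp]: "madj 0 = 0"
  by (simp add: madj_def vec_eq_iff)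

lemma madj_mat_one [simp]: "madj (mat 1) = mat 1"
  by (simp add: madj_def mat_def vec_eq_iff)

lemma mscale_mscale: "mscale c (mscale d Q) = mscale (c * d) Q"
  unfolding mscale_def by (simp add: vec_eq_iff)

lemma mscale_matrix_mult_left: "mscale c (A ** P) = mscale c A ** (P::complex^'n::finite^'n)"
  unfolding mscale_def by (simp add: vec_eq_iff matrix_matrix_mult_def sum_distrib_left algebra_simps)

lemma mscale_matrix_mult_right: "mscale c (A ** P) = A ** mscale c (P::complex^'n::finite^'n)"
  unfolding mscale_def by (simp add: vec_eq_iff matrix_matrix_mult_def sum_distrib_left algebra_simps)

lemma norm_mscale: "norm (mscale c M) = cmod c * norm M"
proof -
  have "(norm (mscale c M))\<^sup>2 = (cmod c * norm M)\<^sup>2"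
    unfolding power2_norm_matrix power_mult_distrib
    by (simp add: mscale_def norm_mult power_mult_distrib sum_distrib_left)
  then show ?thesis by (simp add: power2_eq_iff_nonneg)
qed

lemma bounded_linear_mscale: "bounded_linear (mscale c)"
  by (rule bounded_linear_intro[where K="cmod c"])
     (auto simp: mscale_add norm_mscale mult.commute mscale_mscale simp flip: mscale_of_real)

lemma bounded_linear_frob_inner_left: "bounded_linear (\<lambda>P. frob_inner P M)"
proof (rule bounded_linear_intro[where K="norm M"])
  show "frob_inner (r *\<^sub>R P) M = r *\<^sub>R frob_inner P M" for r P
    by (simp only: frob_inner_mscale_left flip: mscale_of_real) (simp add: scaleR_conv_of_real)
qed (simp_all add: frob_inner_add_left norm_frob_inner_le)

lemma bounded_linear_frob_inner_right: "bounded_linear (\<lambda>P. frob_inner M P)"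
proof (rule bounded_linear_intro[where K="norm M"])
  show "frob_inner M (r *\<^sub>R P) = r *\<^sub>R frob_inner M P" for r P
    by (simp only: frob_inner_mscale_right flip: mscale_of_real) (simp add: scaleR_conv_of_real)
qed (simp_all add: frob_inner_add_right norm_frob_inner_le mult.commute[of _ "norm M"])

lemma frob_inner_matrix_mult_left:
  "frob_inner ((A::complex^'n::finite^'n) ** P) Y = frob_inner P (madj A ** Y)"
proof -
  have "frob_inner (A ** P) Y = (\<Sum>i\<in>UNIV. \<Sum>j\<in>UNIV. \<Sum>l\<in>UNIV. cnj (A$i$l) * cnj (P$l$j) * Y$i$j)"
    unfolding frob_inner_def matrix_matrix_mult_def by (simp add: sum_distrib_right)
  also have "\<dots> = (\<Sum>l\<in>UNIV. \<Sum>j\<in>UNIV. \<Sum>i\<in>UNIV. cnj (A$i$l) * cnj (P$l$j) * Y$i$j)"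
    by (subst sum.swap) (subst (1 2) sum.swap, rule refl)
  also have "\<dots> = frob_inner P (madj A ** Y)"
    unfolding frob_inner_def matrix_matrix_mult_def madj_def by (simp add: sum_distrib_left algebra_simps)
  finally show ?thesis .
qed

lemma norm_matrix_mult_le: "norm ((A::complex^'n::finite^'n) ** P) \<le> norm A * norm P"
proof -
  have entry: "(cmod ((A ** P)$i$j))\<^sup>2 \<le> (norm (A$i))\<^sup>2 * (\<Sum>l\<in>UNIV. (cmod (P$l$j))\<^sup>2)" for i j
  proof -
    have "cmod ((A ** P)$i$j) \<le> (\<Sum>l\<in>UNIV. cmod (A$i$l) * cmod (P$l$j))"
      unfolding matrix_matrix_mult_def by (simp, rule order_trans[OF norm_sum]) (simp add: norm_mult)
    also have "\<dots> \<le> norm (A$i) * L2_set (\<lambda>l. cmod (P$l$j)) UNIV"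
      using L2_set_mult_ineq[of "\<lambda>l. cmod (A$i$l)" "\<lambda>l. cmod (P$l$j)" UNIV] by (simp add: norm_vec_def)
    finally show ?thesis
      by (rule power_mono[where n=2, THEN order_trans]) (simp_all add: power_mult_distrib L2_set_def sum_nonneg)
  qed
  have "(norm (A ** P))\<^sup>2 \<le> (\<Sum>i\<in>UNIV. \<Sum>j\<in>UNIV. (norm (A$i))\<^sup>2 * (\<Sum>l\<in>UNIV. (cmod (P$l$j))\<^sup>2))"
    by (subst power2_norm_matrix) (intro sum_mono entry)
  also have "\<dots> = (\<Sum>i\<in>UNIV. (norm (A$i))\<^sup>2) * (\<Sum>j\<in>UNIV. \<Sum>l\<in>UNIV. (cmod (P$l$j))\<^sup>2)"
    by (rule sum_product[symmetric])
  also have "\<dots> = (norm A * norm P)\<^sup>2"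
  proof -
    have "(\<Sum>i\<in>UNIV. (norm (A$i))\<^sup>2) = (norm A)\<^sup>2"
      by (simp add: norm_vec_def L2_set_def sum_nonneg)
    moreover have "(\<Sum>j\<in>UNIV. \<Sum>l\<in>UNIV. (cmod (P$l$j))\<^sup>2) = (norm P)\<^sup>2"
      unfolding power2_norm_matrix[of P] by (rule sum.swap)
    ultimately show ?thesis by (simp add: power_mult_distrib)
  qed
  finally show ?thesis by (rule power2_le_imp_le) simp
qed

section \<open>The Hilbert space \<open>\<H>\<^sub>n\<close>\<close>

lemma Zn_add: "a \<in> Zn N \<Longrightarrow> b \<in> Zn N \<Longrightarrow> a + b \<in> Zn N"
  and Zn_diff: "a \<in> Zn N \<Longrightarrow> b \<in> Zn N \<Longrightarrow> a - b \<in> Zn N"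
  and Zn_uminus: "a \<in> Zn N \<Longrightarrow> - a \<in> Zn N"
  by (simp_all add: Zn_def)

lemma bij_betw_shift_Zn: "bij_betw (\<lambda>(\<beta>, \<alpha>). (\<beta> + \<alpha>, \<alpha>)) (Zn N \<times> Zn N) (Zn N \<times> Zn N)"
  by (rule bij_betwI[where g="\<lambda>(\<gamma>, \<alpha>). (\<gamma> - \<alpha>, \<alpha>)"]) (auto simp: Zn_add Zn_diff)

lemma bij_betw_uminus_Zn: "bij_betw uminus (Zn N) (Zn N)"
  by (rule bij_betwI[where g=uminus]) (auto simp: Zn_uminus)

lemma ell2_vanishes: "f \<in> ell2 N \<Longrightarrow> \<alpha> \<notin> Zn N \<Longrightarrow> f \<alpha> = 0"
  by (simp add: ell2_def)

lemma ell2_summable: "f \<in> ell2 N \<Longrightarrow> (\<lambda>\<alpha>. (norm (f \<alpha>))\<^sup>2) summable_on Zn N"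
  by (simp add: ell2_def)

lemma ell2_norm_le:
  assumes f: "f \<in> ell2 N" and g: "\<And>\<alpha>. \<alpha> \<notin> Zn N \<Longrightarrow> g \<alpha> = 0"
    and le: "\<And>\<alpha>. \<alpha> \<in> Zn N \<Longrightarrow> norm (g \<alpha>) \<le> c * norm (f \<alpha>)"
  shows "g \<in> ell2 N"
proof -
  have "(norm (g \<alpha>))\<^sup>2 \<le> c\<^sup>2 * (norm (f \<alpha>))\<^sup>2" if "\<alpha> \<in> Zn N" for \<alpha>
    using power_mono[OF le[OF that], of 2] by (simp add: power_mult_distrib)
  then have "(\<lambda>\<alpha>. (norm (g \<alpha>))\<^sup>2) summable_on Zn N"
    by (intro summable_on_comparison_test[OF summable_on_cmult_right[OF ell2_summable[OF f]]]) auto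
  then show ?thesis using g by (simp add: ell2_def)
qed

lemma ell2_cadd:
  assumes f: "f \<in> ell2 N" and g: "g \<in> ell2 N"
  shows "cadd f g \<in> ell2 N"
proof -
  have "(norm (cadd f g \<alpha>))\<^sup>2 \<le> 2 * (norm (f \<alpha>))\<^sup>2 + 2 * (norm (g \<alpha>))\<^sup>2" for \<alpha>
  proof -
    have "(norm (cadd f g \<alpha>))\<^sup>2 \<le> (norm (f \<alpha>) + norm (g \<alpha>))\<^sup>2"
      by (simp add: cadd_def power_mono norm_triangle_ineq)
    also have "\<dots> \<le> 2 * (norm (f \<alpha>))\<^sup>2 + 2 * (norm (g \<alpha>))\<^sup>2"
      using sum_squares_bound[of "norm (f \<alpha>)" "norm (g \<alpha>)"] by (simp add: power2_sum)
    finally show ?thesis .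
  qed
  then have "(\<lambda>\<alpha>. (norm (cadd f g \<alpha>))\<^sup>2) summable_on Zn N"
    by (intro summable_on_comparison_test[OF summable_on_add[OF
          summable_on_cmult_right[OF ell2_summable[OF f]] summable_on_cmult_right[OF ell2_summable[OF g]]]])
       auto
  then show ?thesis using f g by (simp add: ell2_def cadd_def)
qed

lemma ell2_csmul: "f \<in> ell2 N \<Longrightarrow> csmul c f \<in> ell2 N"
  by (rule ell2_norm_le[where c="cmod c"]) (auto simp: csmul_def norm_mscale ell2_vanishes)

lemma ell2_finite_support:
  assumes "finite F" "F \<subseteq> Zn N" "\<And>\<alpha>. \<alpha> \<notin> F \<Longrightarrow> f \<alpha> = 0"
  shows "f \<in> ell2 N"
proof -
  have "(\<lambda>\<alpha>. (norm (f \<alpha>))\<^sup>2) summable_on Zn N"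
    by (rule finite_nonzero_values_imp_summable_on, rule finite_subset[of _ F]) (use assms in auto)
  then show ?thesis using assms by (auto simp: ell2_def)
qed

lemma norm_le_ell2_sum:
  assumes "f \<in> ell2 N" "\<alpha> \<in> Zn N"
  shows "(norm (f \<alpha>))\<^sup>2 \<le> infsum (\<lambda>\<alpha>. (norm (f \<alpha>))\<^sup>2) (Zn N)"
  using finite_sum_le_infsum[OF ell2_summable[OF assms(1)], of "{\<alpha>}"] assms by simp

definition ell2_inner :: "nat \<Rightarrow> 'n::finite coeffs \<Rightarrow> 'n coeffs \<Rightarrow> complex" where
  "ell2_inner N f g = infsum (\<lambda>\<alpha>. frob_inner (f \<alpha>) (g \<alpha>)) (Zn N)"

lemma hs_ip_eq: "hs_ip N (f::'n::finite coeffs) g = ell2_inner N f g / of_nat CARD('n)"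
  by (simp add: hs_ip_def ell2_inner_def frob_inner_def)

lemma summable_frob_inner:
  assumes f: "f \<in> ell2 N" and g: "g \<in> ell2 N"
  shows "(\<lambda>\<alpha>. frob_inner (f \<alpha>) (g \<alpha>)) summable_on Zn N"
proof -
  have "norm (frob_inner (f \<alpha>) (g \<alpha>)) \<le> (norm (f \<alpha>))\<^sup>2 + (norm (g \<alpha>))\<^sup>2" for \<alpha>
    using norm_frob_inner_le[of "f \<alpha>" "g \<alpha>"] sum_squares_bound[of "norm (f \<alpha>)" "norm (g \<alpha>)"]
      mult_nonneg_nonneg[OF norm_ge_zero norm_ge_zero, of "f \<alpha>" "g \<alpha>"]
    by linarith
  then have "(\<lambda>\<alpha>. norm (frob_inner (f \<alpha>) (g \<alpha>))) summable_on Zn N"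
    by (intro Infinite_Sum.abs_summable_on_comparison_test'[OF
          summable_on_add[OF ell2_summable[OF f] ell2_summable[OF g]]])
  then show ?thesis by (rule abs_summable_summable)
qed

lemma hs_ip_cadd_left:
  "f \<in> ell2 N \<Longrightarrow> g \<in> ell2 N \<Longrightarrow> h \<in> ell2 N \<Longrightarrow> hs_ip N (cadd f g) h = hs_ip N f h + hs_ip N g h"
  unfolding hs_ip_eq ell2_inner_def cadd_def frob_inner_add_left
  by (subst infsum_add) (auto intro: summable_frob_inner simp: add_divide_distrib)

lemma hs_ip_cadd_right:
  "f \<in> ell2 N \<Longrightarrow> g \<in> ell2 N \<Longrightarrow> h \<in> ell2 N \<Longrightarrow> hs_ip N h (cadd f g) = hs_ip N h f + hs_ip N h g"
  unfolding hs_ip_eq ell2_inner_def cadd_def frob_inner_add_right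
  by (subst infsum_add) (auto intro: summable_frob_inner simp: add_divide_distrib)

lemma hs_ip_csmul_right: "hs_ip N h (csmul c f) = c * hs_ip N h f"
  unfolding hs_ip_eq ell2_inner_def csmul_def frob_inner_mscale_right
  by (simp add: infsum_cmult_right')

lemma ell2_inner_self:
  "f \<in> ell2 N \<Longrightarrow> ell2_inner N f f = of_real (infsum (\<lambda>\<alpha>. (norm (f \<alpha>))\<^sup>2) (Zn N))"
  unfolding ell2_inner_def frob_inner_self
  by (rule infsumI, rule has_sum_of_real, rule has_sum_infsum, rule ell2_summable)

section \<open>Skew-symmetric perturbations of skew-adjoint operators\<close>

lemma adjoint_exists_add_skew_symmetric_iff:
  fixes S B :: "'n::finite coeffs \<Rightarrow> 'n coeffs"
  assumes D: "D \<subseteq> ell2 N" and S_ell2: "\<And>x. x \<in> D \<Longrightarrow> S x \<in> ell2 N"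
    and B_ell2: "\<And>x. x \<in> ell2 N \<Longrightarrow> B x \<in> ell2 N"
    and B_skew: "\<And>x y. x \<in> ell2 N \<Longrightarrow> y \<in> ell2 N \<Longrightarrow> hs_ip N (B x) y = - hs_ip N x (B y)"
    and y: "y \<in> ell2 N"
  shows "(\<exists>z\<in>ell2 N. \<forall>x\<in>D. hs_ip N (cadd (B x) (S x)) y = hs_ip N x z)
     \<longleftrightarrow> (\<exists>z\<in>ell2 N. \<forall>x\<in>D. hs_ip N (S x) y = hs_ip N x z)"
proof -
  have ip: "hs_ip N (cadd (B x) (S x)) y = - hs_ip N x (B y) + hs_ip N (S x) y" if "x \<in> D" for x
    using that D y by (simp add: hs_ip_cadd_left B_ell2 S_ell2 B_skew subset_iff)
  show ?thesis
  proof
    assume "\<exists>z\<in>ell2 N. \<forall>x\<in>D. hs_ip N (cadd (B x) (S x)) y = hs_ip N x z"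
    then obtain z where z: "z \<in> ell2 N" "\<forall>x\<in>D. hs_ip N (cadd (B x) (S x)) y = hs_ip N x z"
      by blast
    show "\<exists>z\<in>ell2 N. \<forall>x\<in>D. hs_ip N (S x) y = hs_ip N x z"
    proof (intro bexI ballI)
      show "cadd z (B y) \<in> ell2 N" using z y by (intro ell2_cadd B_ell2)
      show "hs_ip N (S x) y = hs_ip N x (cadd z (B y))" if "x \<in> D" for x
        using z ip[OF that] that D y by (auto simp: hs_ip_cadd_right B_ell2)
    qed
  next
    assume "\<exists>z\<in>ell2 N. \<forall>x\<in>D. hs_ip N (S x) y = hs_ip N x z"
    then obtain z where z: "z \<in> ell2 N" "\<forall>x\<in>D. hs_ip N (S x) y = hs_ip N x z" by blast
    show "\<exists>z\<in>ell2 N. \<forall>x\<in>D. hs_ip N (cadd (B x) (S x)) y = hs_ip N x z"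
    proof (intro bexI ballI)
      show "cadd z (csmul (-1) (B y)) \<in> ell2 N" using z y by (intro ell2_cadd ell2_csmul B_ell2)
      show "hs_ip N (cadd (B x) (S x)) y = hs_ip N x (cadd z (csmul (-1) (B y)))" if "x \<in> D" for x
        using z ip[OF that] that D y
        by (auto simp: hs_ip_cadd_right hs_ip_csmul_right ell2_csmul B_ell2)
    qed
  qed
qed

lemma skew_adjoint_add_skew_symmetric:
  fixes S B :: "'n::finite coeffs \<Rightarrow> 'n coeffs"
  assumes S: "skew_adjoint (ell2 N) (hs_ip N) D S"
    and B_ell2: "\<And>x. x \<in> ell2 N \<Longrightarrow> B x \<in> ell2 N"
    and B_cadd: "\<And>x y. x \<in> ell2 N \<Longrightarrow> y \<in> ell2 N \<Longrightarrow> B (cadd x y) = cadd (B x) (B y)"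
    and B_csmul: "\<And>c x. x \<in> ell2 N \<Longrightarrow> B (csmul c x) = csmul c (B x)"
    and B_skew: "\<And>x y. x \<in> ell2 N \<Longrightarrow> y \<in> ell2 N \<Longrightarrow> hs_ip N (B x) y = - hs_ip N x (B y)"
  shows "skew_adjoint (ell2 N) (hs_ip N) D (\<lambda>x. cadd (B x) (S x))"
proof -
  have D: "D \<subseteq> ell2 N" and S_ell2: "\<And>x. x \<in> D \<Longrightarrow> S x \<in> ell2 N"
    and S_cadd: "\<And>x y. x \<in> D \<Longrightarrow> y \<in> D \<Longrightarrow> cadd x y \<in> D \<and> S (cadd x y) = cadd (S x) (S y)"
    and S_csmul: "\<And>c x. x \<in> D \<Longrightarrow> csmul c x \<in> D \<and> S (csmul c x) = csmul c (S x)"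
    and S_dense: "\<forall>f\<in>ell2 N. \<forall>e>0. \<exists>g\<in>D. Re (hs_ip N (csub f g) (csub f g)) < e\<^sup>2"
    and S_adj: "\<And>y. y \<in> ell2 N \<Longrightarrow>
                  (\<exists>z\<in>ell2 N. \<forall>x\<in>D. hs_ip N (S x) y = hs_ip N x z) \<longleftrightarrow> y \<in> D"
    and S_skew: "\<And>x y. x \<in> D \<Longrightarrow> y \<in> D \<Longrightarrow> hs_ip N (S x) y = - hs_ip N x (S y)"
    using S unfolding skew_adjoint_def by blast+
  show ?thesis
    unfolding skew_adjoint_def
  proof (intro conjI ballI allI impI)
    fix x y assume x: "x \<in> D" and y: "y \<in> D"
    show "cadd x y \<in> D" using S_cadd[OF x y] ..
    show "cadd (B (cadd x y)) (S (cadd x y)) = cadd (cadd (B x) (S x)) (cadd (B y) (S y))"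
      using S_cadd[OF x y] B_cadd x y D by (auto simp: cadd_def fun_eq_iff)
    have "x \<in> ell2 N" "y \<in> ell2 N" using x y D by auto
    then show "hs_ip N (cadd (B x) (S x)) y = - hs_ip N x (cadd (B y) (S y))"
      using S_skew[OF x y] x y by (simp add: hs_ip_cadd_left hs_ip_cadd_right B_ell2 S_ell2 B_skew)
  next
    fix c x assume x: "x \<in> D"
    show "csmul c x \<in> D" using S_csmul[OF x] ..
    show "cadd (B (csmul c x)) (S (csmul c x)) = csmul c (cadd (B x) (S x))"
      using S_csmul[OF x] B_csmul x D by (auto simp: cadd_def csmul_def mscale_add)
  next
    fix y :: "'n coeffs" assume y: "y \<in> ell2 N"
    have "(\<exists>z\<in>ell2 N. \<forall>x\<in>D. hs_ip N (cadd (B x) (S x)) y = hs_ip N x z)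
        \<longleftrightarrow> (\<exists>z\<in>ell2 N. \<forall>x\<in>D. hs_ip N (S x) y = hs_ip N x z)"
      by (rule adjoint_exists_add_skew_symmetric_iff[where S=S and B=B])
         (use D S_ell2 B_ell2 B_skew y in auto)
    then show "(\<exists>z\<in>ell2 N. \<forall>x\<in>D. hs_ip N (cadd (B x) (S x)) y = hs_ip N x z) \<longleftrightarrow> y \<in> D"
      using S_adj[OF y] by blast
  qed (use D S_dense in \<open>auto intro: ell2_cadd B_ell2 S_ell2\<close>)
qed

section \<open>The derivations\<close>

lemma domD_ell2: "x \<in> domD N k \<Longrightarrow> x \<in> ell2 N"
  by (simp add: domD_def)

lemma domD_cadd:
  assumes "x \<in> domD N k" "y \<in> domD N k"
  shows "cadd x y \<in> domD N k"
proof -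
  have "(\<lambda>\<alpha>. of_int (\<alpha> k) *\<^sub>R cadd x y \<alpha>)
      = cadd (\<lambda>\<alpha>. of_int (\<alpha> k) *\<^sub>R x \<alpha>) (\<lambda>\<alpha>. of_int (\<alpha> k) *\<^sub>R y \<alpha>)"
    by (simp add: cadd_def fun_eq_iff scaleR_add_right)
  then show ?thesis using assms by (simp add: domD_def ell2_cadd)
qed

lemma domD_csmul:
  assumes "x \<in> domD N k"
  shows "csmul c x \<in> domD N k"
proof -
  have "(\<lambda>\<alpha>. of_int (\<alpha> k) *\<^sub>R csmul c x \<alpha>) \<in> ell2 N"
    by (rule ell2_norm_le[where f="\<lambda>\<alpha>. of_int (\<alpha> k) *\<^sub>R x \<alpha>" and c="cmod c"])
       (use assms in \<open>auto simp: domD_def csmul_def norm_mscale ell2_vanishes simp flip: mscale_of_real\<close>)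
  then show ?thesis using assms by (simp add: domD_def ell2_csmul)
qed

lemma domD_finite_support:
  assumes "finite F" "F \<subseteq> Zn N" "\<And>\<alpha>. \<alpha> \<notin> F \<Longrightarrow> f \<alpha> = 0"
  shows "f \<in> domD N k"
proof -
  have "f \<in> ell2 N" by (rule ell2_finite_support[OF assms])
  moreover have "(\<lambda>\<alpha>. of_int (\<alpha> k) *\<^sub>R f \<alpha>) \<in> ell2 N"
    by (rule ell2_finite_support[OF assms(1,2)]) (simp add: assms(3))
  ultimately show ?thesis by (simp add: domD_def)
qed

lemma deriv_ell2: "x \<in> domD N k \<Longrightarrow> deriv k x \<in> ell2 N"
  unfolding domD_def
  by (auto intro!: ell2_norm_le[where f="\<lambda>\<alpha>. of_int (\<alpha> k) *\<^sub>R x \<alpha>" and c=1]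
      simp: ell2_vanishes deriv_def norm_mscale norm_mult)

lemma deriv_cadd: "deriv k (cadd x y) = cadd (deriv k x) (deriv k y)"
  by (simp add: deriv_def cadd_def mscale_add fun_eq_iff)

lemma deriv_csmul: "deriv k (csmul c x) = csmul c (deriv k x)"
  by (simp add: deriv_def csmul_def mscale_mscale mult.commute fun_eq_iff)

lemma hs_ip_deriv: "hs_ip N (deriv k x) y = - hs_ip N x (deriv k y)"
  unfolding hs_ip_eq ell2_inner_def deriv_def
  by (simp add: frob_inner_mscale_left frob_inner_mscale_right infsum_uminus)

lemma ell2_inner_single:
  assumes "\<beta> \<in> Zn N"
  shows "ell2_inner N (\<lambda>\<alpha>. if \<alpha> = \<beta> then E else 0) w = frob_inner E (w \<beta>)"
proof -
  have "ell2_inner N (\<lambda>\<alpha>. if \<alpha> = \<beta> then E else 0) w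
      = infsum (\<lambda>\<alpha>. frob_inner (if \<alpha> = \<beta> then E else 0) (w \<alpha>)) {\<beta>}"
    unfolding ell2_inner_def by (rule infsum_cong_neutral) (use assms in \<open>auto simp: frob_inner_def\<close>)
  then show ?thesis by simp
qed

lemma domD_if_adjoint:
  fixes y z :: "'n::finite coeffs"
  assumes y: "y \<in> ell2 N" and z: "z \<in> ell2 N"
    and adj: "\<forall>x\<in>domD N k. hs_ip N (deriv k x) y = hs_ip N x z"
  shows "y \<in> domD N k"
proof -
  have z_eq: "z \<beta> = mscale (- (\<i> * of_int (\<beta> k))) (y \<beta>)" if \<beta>: "\<beta> \<in> Zn N" for \<beta>
  proof (rule frob_inner_eqI)
    fix E :: "complex^'n^'n"
    let ?e = "\<lambda>\<alpha>. if \<alpha> = \<beta> then E else 0"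
    have "deriv k ?e = (\<lambda>\<alpha>. if \<alpha> = \<beta> then mscale (\<i> * of_int (\<beta> k)) E else 0)"
      by (auto simp: deriv_def fun_eq_iff)
    moreover have "?e \<in> domD N k" by (rule domD_finite_support[of "{\<beta>}"]) (use \<beta> in auto)
    ultimately have "hs_ip N (\<lambda>\<alpha>. if \<alpha> = \<beta> then mscale (\<i> * of_int (\<beta> k)) E else 0) y = hs_ip N ?e z"
      using adj by metis
    then have "frob_inner (mscale (\<i> * of_int (\<beta> k)) E) (y \<beta>) = frob_inner E (z \<beta>)"
      by (simp add: hs_ip_eq ell2_inner_single[OF \<beta>])
    then show "frob_inner E (z \<beta>) = frob_inner E (mscale (- (\<i> * of_int (\<beta> k))) (y \<beta>))"
      by (simp add: frob_inner_mscale_left frob_inner_mscale_right)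
  qed
  have "(\<lambda>\<alpha>. of_int (\<alpha> k) *\<^sub>R y \<alpha>) \<in> ell2 N"
    by (rule ell2_norm_le[OF z, where c=1]) (auto simp: z_eq norm_mscale norm_mult ell2_vanishes[OF y])
  then show ?thesis using y by (simp add: domD_def)
qed

definition truncation :: "(nat \<Rightarrow> int) set \<Rightarrow> 'n::finite coeffs \<Rightarrow> 'n coeffs" where
  "truncation F f = (\<lambda>\<alpha>. if \<alpha> \<in> F then f \<alpha> else 0)"

lemma ell2_truncation_dense:
  fixes f :: "'n::finite coeffs"
  assumes f: "f \<in> ell2 N" and e: "e > 0"
  obtains F where "finite F" "F \<subseteq> Zn N"
    "Re (hs_ip N (csub f (truncation F f)) (csub f (truncation F f))) < e\<^sup>2"
proof -
  define n where "n = real CARD('n)"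
  have n: "n > 0" by (simp add: n_def)
  obtain F where F: "finite F" "F \<subseteq> Zn N"
    and approx: "dist (sum (\<lambda>\<alpha>. (norm (f \<alpha>))\<^sup>2) F) (infsum (\<lambda>\<alpha>. (norm (f \<alpha>))\<^sup>2) (Zn N)) \<le> n * e\<^sup>2 / 2"
    using infsum_finite_approximation[OF ell2_summable[OF f], of "n * e\<^sup>2 / 2"] n e by auto
  define h where "h = csub f (truncation F f)"
  have h: "h \<alpha> = (if \<alpha> \<in> F then 0 else f \<alpha>)" for \<alpha> by (simp add: h_def csub_def truncation_def)
  have h_ell2: "h \<in> ell2 N" by (rule ell2_norm_le[OF f, where c=1]) (auto simp: h ell2_vanishes[OF f])
  have head: "(\<lambda>\<alpha>. if \<alpha> \<in> F then (norm (f \<alpha>))\<^sup>2 else 0) summable_on Zn N"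
    by (rule finite_nonzero_values_imp_summable_on, rule finite_subset[OF _ F(1)]) auto
  have "infsum (\<lambda>\<alpha>. (norm (f \<alpha>))\<^sup>2) (Zn N)
      = infsum (\<lambda>\<alpha>. (if \<alpha> \<in> F then (norm (f \<alpha>))\<^sup>2 else 0) + (norm (h \<alpha>))\<^sup>2) (Zn N)"
    by (rule infsum_cong) (simp add: h)
  also have "\<dots> = infsum (\<lambda>\<alpha>. if \<alpha> \<in> F then (norm (f \<alpha>))\<^sup>2 else 0) (Zn N)
                  + infsum (\<lambda>\<alpha>. (norm (h \<alpha>))\<^sup>2) (Zn N)"
    by (rule infsum_add[OF head ell2_summable[OF h_ell2]])
  also have "infsum (\<lambda>\<alpha>. if \<alpha> \<in> F then (norm (f \<alpha>))\<^sup>2 else 0) (Zn N) = sum (\<lambda>\<alpha>. (norm (f \<alpha>))\<^sup>2) F"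
    using F by (subst infsum_cong_neutral[where T=F]) auto
  finally have "Re (hs_ip N h h) \<le> e\<^sup>2 / 2"
    using approx n
    by (simp add: hs_ip_eq ell2_inner_self[OF h_ell2] dist_real_def n_def[symmetric] field_simps)
  also have "\<dots> < e\<^sup>2" using e by simp
  finally show ?thesis using that F unfolding h_def by blast
qed

lemma skew_adjoint_deriv:
  "skew_adjoint (ell2 N) (hs_ip N) (domD N k) (deriv k :: 'n::finite coeffs \<Rightarrow> 'n coeffs)"
  unfolding skew_adjoint_def
proof (intro conjI ballI allI impI)
  fix f :: "'n coeffs" and e :: real assume "f \<in> ell2 N" "e > 0"
  then obtain F where "finite F" "F \<subseteq> Zn N"
    "Re (hs_ip N (csub f (truncation F f)) (csub f (truncation F f))) < e\<^sup>2"
    by (rule ell2_truncation_dense)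
  moreover from this have "truncation F f \<in> domD N k"
    by (intro domD_finite_support) (auto simp: truncation_def)
  ultimately show "\<exists>g\<in>domD N k. Re (hs_ip N (csub f g) (csub f g)) < e\<^sup>2" by blast
next
  fix y :: "'n coeffs" assume y: "y \<in> ell2 N"
  show "(\<exists>z\<in>ell2 N. \<forall>x\<in>domD N k. hs_ip N (deriv k x) y = hs_ip N x z) \<longleftrightarrow> y \<in> domD N k"
  proof
    assume "y \<in> domD N k"
    then have "csmul (-1) (deriv k y) \<in> ell2 N" by (intro ell2_csmul deriv_ell2)
    then show "\<exists>z\<in>ell2 N. \<forall>x\<in>domD N k. hs_ip N (deriv k x) y = hs_ip N x z"
      by (intro bexI[of _ "csmul (-1) (deriv k y)"]) (auto simp: hs_ip_deriv hs_ip_csmul_right)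
  qed (use y domD_if_adjoint in blast)
qed (auto simp: domD_ell2 deriv_ell2 domD_cadd domD_csmul deriv_cadd deriv_csmul hs_ip_deriv)

section \<open>Twisted multiplication by a summable element\<close>

definition twist_form :: "(nat \<Rightarrow> nat \<Rightarrow> real) \<Rightarrow> nat \<Rightarrow> (nat \<Rightarrow> int) \<Rightarrow> (nat \<Rightarrow> int) \<Rightarrow> real" where
  "twist_form \<theta> N \<alpha> \<beta> = (\<Sum>k<N. \<Sum>l<k. of_int (\<alpha> k) * of_int (\<beta> l) * \<theta> k l)"

lemma omega_eq_cis: "omega \<theta> N \<alpha> \<beta> = cis (2 * pi * twist_form \<theta> N \<alpha> \<beta>)"
  by (simp add: omega_def twist_form_def cis_conv_exp algebra_simps)

lemma omega_zero_left [simp]: "omega \<theta> N 0 \<beta> = 1"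
  and omega_zero_right [simp]: "omega \<theta> N \<alpha> 0 = 1"
  by (simp_all add: omega_def)

lemma norm_omega [simp]: "norm (omega \<theta> N \<alpha> \<beta>) = 1"
  by (simp add: omega_eq_cis)

lemma twist_form_uminus_left: "twist_form \<theta> N (- \<alpha>) \<beta> = - twist_form \<theta> N \<alpha> \<beta>"
  and twist_form_uminus_right: "twist_form \<theta> N \<alpha> (- \<beta>) = - twist_form \<theta> N \<alpha> \<beta>"
  and twist_form_add_right: "twist_form \<theta> N \<alpha> (\<beta> + \<gamma>) = twist_form \<theta> N \<alpha> \<beta> + twist_form \<theta> N \<alpha> \<gamma>"
  by (simp_all add: twist_form_def sum_negf sum.distrib algebra_simps)

lemma omega_inversion_phase:
  "omega \<theta> N (- \<alpha>) (\<beta> + \<alpha>) * cnj (omega \<theta> N \<alpha> (- \<alpha>)) = cnj (omega \<theta> N \<alpha> \<beta>)"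
  by (simp add: omega_eq_cis cis_cnj cis_mult twist_form_uminus_left twist_form_uminus_right
      twist_form_add_right) (simp add: algebra_simps)

locale l1_multiplier =
  fixes \<theta> :: "nat \<Rightarrow> nat \<Rightarrow> real" and N :: nat and a :: "'n::finite coeffs"
  assumes a_l1: "(\<lambda>\<alpha>. norm (a \<alpha>)) summable_on Zn N"
begin

abbreviation lmult :: "'n coeffs \<Rightarrow> 'n coeffs" where
  "lmult x \<equiv> tw_mult \<theta> N a x"

definition conv_term :: "'n coeffs \<Rightarrow> (nat \<Rightarrow> int) \<Rightarrow> (nat \<Rightarrow> int) \<Rightarrow> complex^'n^'n" where
  "conv_term x \<gamma> \<alpha> = mscale (omega \<theta> N \<alpha> (\<gamma> - \<alpha>)) (a \<alpha> ** x (\<gamma> - \<alpha>))"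

lemma lmult_eq: "lmult x \<gamma> = (if \<gamma> \<in> Zn N then infsum (conv_term x \<gamma>) (Zn N) else 0)"
  by (simp add: tw_mult_def conv_term_def[abs_def])

lemma norm_conv_term_le: "norm (conv_term x \<gamma> \<alpha>) \<le> norm (a \<alpha>) * norm (x (\<gamma> - \<alpha>))"
  by (simp add: conv_term_def norm_mscale norm_matrix_mult_le)

lemma summable_conv_term:
  assumes x: "x \<in> ell2 N" and \<gamma>: "\<gamma> \<in> Zn N"
  shows "(\<lambda>\<alpha>. norm (conv_term x \<gamma> \<alpha>)) summable_on Zn N" and "conv_term x \<gamma> summable_on Zn N"
proof -
  define X where "X = infsum (\<lambda>\<alpha>. (norm (x \<alpha>))\<^sup>2) (Zn N)"
  have "norm (conv_term x \<gamma> \<alpha>) \<le> norm (a \<alpha>) * (1 + X)" if "\<alpha> \<in> Zn N" for \<alpha>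
  proof -
    have "norm (x (\<gamma> - \<alpha>)) \<le> 1 + (norm (x (\<gamma> - \<alpha>)))\<^sup>2"
      by (rule le_one_plus_square)
    also have "\<dots> \<le> 1 + X"
      unfolding X_def using norm_le_ell2_sum[OF x Zn_diff[OF \<gamma> that]] by simp
    finally show ?thesis
      using norm_conv_term_le[of x \<gamma> \<alpha>] mult_left_mono[OF _ norm_ge_zero, of _ _ "a \<alpha>"] by force
  qed
  then show "(\<lambda>\<alpha>. norm (conv_term x \<gamma> \<alpha>)) summable_on Zn N"
    by (intro Infinite_Sum.abs_summable_on_comparison_test'[OF summable_on_cmult_left[OF a_l1]])
  then show "conv_term x \<gamma> summable_on Zn N" by (rule abs_summable_summable)
qed

lemma summable_shifted_weight:
  assumes x: "x \<in> ell2 N"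
  shows "(\<lambda>(\<gamma>, \<alpha>). norm (a \<alpha>) * (norm (x (\<gamma> - \<alpha>)))\<^sup>2) summable_on Zn N \<times> Zn N"
proof -
  have "(\<lambda>(\<beta>, \<alpha>). (norm (x \<beta>))\<^sup>2 * norm (a \<alpha>)) summable_on Zn N \<times> Zn N"
    by (rule summable_on_product_nonneg[OF ell2_summable[OF x] a_l1]) auto
  then show ?thesis
    using summable_on_reindex_bij_betw[OF bij_betw_shift_Zn,
        of "\<lambda>(\<gamma>, \<alpha>). norm (a \<alpha>) * (norm (x (\<gamma> - \<alpha>)))\<^sup>2" N]
    by (simp add: case_prod_unfold mult.commute)
qed

lemma lmult_ell2:
  assumes x: "x \<in> ell2 N"
  shows "lmult x \<in> ell2 N"
proof -
  define W where "W = infsum (\<lambda>\<alpha>. norm (a \<alpha>)) (Zn N)"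
  define S where "S \<gamma> = infsum (\<lambda>\<alpha>. norm (a \<alpha>) * (norm (x (\<gamma> - \<alpha>)))\<^sup>2) (Zn N)" for \<gamma>
  have inner: "(\<lambda>\<alpha>. norm (a \<alpha>) * (norm (x (\<gamma> - \<alpha>)))\<^sup>2) summable_on Zn N" if "\<gamma> \<in> Zn N" for \<gamma>
    using summable_on_SigmaD1[OF summable_shifted_weight[OF x] that] by simp
  have S: "S summable_on Zn N"
  proof -
    have "(\<lambda>\<gamma>. infsum (\<lambda>\<alpha>. (\<lambda>(\<gamma>, \<alpha>). norm (a \<alpha>) * (norm (x (\<gamma> - \<alpha>)))\<^sup>2) (\<gamma>, \<alpha>)) (Zn N))
        summable_on Zn N"
      by (rule summable_on_SigmaD[OF summable_shifted_weight[OF x]]) (simp add: inner)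
    then show ?thesis by (simp add: S_def[abs_def])
  qed
  \<comment> \<open>Young's inequality: the weight \<open>|a \<alpha>|\<close> in Cauchy-Schwarz makes the bound summable in \<open>\<gamma>\<close>.\<close>
  have "(norm (lmult x \<gamma>))\<^sup>2 \<le> W * S \<gamma>" if \<gamma>: "\<gamma> \<in> Zn N" for \<gamma>
  proof -
    note CS = infsum_weighted_Cauchy_Schwarz[OF a_l1 inner[OF \<gamma>] norm_ge_zero norm_ge_zero]
    have "norm (lmult x \<gamma>) \<le> infsum (\<lambda>\<alpha>. norm (conv_term x \<gamma> \<alpha>)) (Zn N)"
      using \<gamma> norm_infsum_bound[OF summable_conv_term(1)[OF x \<gamma>]] by (simp add: lmult_eq)
    also have "\<dots> \<le> infsum (\<lambda>\<alpha>. norm (a \<alpha>) * norm (x (\<gamma> - \<alpha>))) (Zn N)"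
      by (rule infsum_mono[OF summable_conv_term(1)[OF x \<gamma>] CS(1)]) (rule norm_conv_term_le)
    finally have "(norm (lmult x \<gamma>))\<^sup>2 \<le> (infsum (\<lambda>\<alpha>. norm (a \<alpha>) * norm (x (\<gamma> - \<alpha>))) (Zn N))\<^sup>2"
      by (rule power_mono) simp
    also have "\<dots> \<le> W * S \<gamma>"
      unfolding W_def S_def by (rule CS(2))
    finally show ?thesis .
  qed
  then have "(\<lambda>\<gamma>. (norm (lmult x \<gamma>))\<^sup>2) summable_on Zn N"
    by (intro summable_on_comparison_test[OF summable_on_cmult_right[OF S, of W]]) auto
  then show ?thesis by (simp add: ell2_def lmult_eq)
qed

lemma lmult_cadd:
  assumes x: "x \<in> ell2 N" and y: "y \<in> ell2 N"
  shows "lmult (cadd x y) = cadd (lmult x) (lmult y)"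
proof
  fix \<gamma>
  have "conv_term (cadd x y) \<gamma> = (\<lambda>\<alpha>. conv_term x \<gamma> \<alpha> + conv_term y \<gamma> \<alpha>)"
    unfolding fun_eq_iff conv_term_def cadd_def by (simp add: matrix_add_ldistrib mscale_add)
  then show "lmult (cadd x y) \<gamma> = cadd (lmult x) (lmult y) \<gamma>"
    by (simp add: lmult_eq cadd_def infsum_add summable_conv_term(2)[OF x] summable_conv_term(2)[OF y])
qed

lemma lmult_csmul:
  assumes x: "x \<in> ell2 N"
  shows "lmult (csmul c x) = csmul c (lmult x)"
proof
  fix \<gamma>
  have "conv_term (csmul c x) \<gamma> = (\<lambda>\<alpha>. mscale c (conv_term x \<gamma> \<alpha>))"
    unfolding fun_eq_iff conv_term_def csmul_def
    by (simp add: mscale_mscale mult.commute flip: mscale_matrix_mult_right)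
  moreover have "infsum (\<lambda>\<alpha>. mscale c (conv_term x \<gamma> \<alpha>)) (Zn N) = mscale c (infsum (conv_term x \<gamma>) (Zn N))"
    if "\<gamma> \<in> Zn N"
    by (rule infsum_bounded_linear[OF bounded_linear_mscale summable_conv_term(2)[OF x that]])
  ultimately show "lmult (csmul c x) \<gamma> = csmul c (lmult x) \<gamma>"
    by (simp add: lmult_eq csmul_def)
qed

end

locale skew_l1_multiplier = l1_multiplier +
  assumes a_skew: "\<And>\<alpha>. tw_star \<theta> N a \<alpha> = - a \<alpha>"
begin

lemma a_uminus:
  assumes "\<alpha> \<in> Zn N"
  shows "a (- \<alpha>) = mscale (- cnj (omega \<theta> N \<alpha> (- \<alpha>))) (madj (a \<alpha>))"
proof -
  have "- a (- \<alpha>) = mscale (cnj (omega \<theta> N \<alpha> (- \<alpha>))) (madj (a \<alpha>))"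
    using a_skew[of "- \<alpha>"] Zn_uminus[OF assms] by (simp add: tw_star_def)
  then have "a (- \<alpha>) = - mscale (cnj (omega \<theta> N \<alpha> (- \<alpha>))) (madj (a \<alpha>))"
    by (metis minus_minus)
  then show ?thesis by (simp add: mscale_def vec_eq_iff)
qed

text \<open>
  Both \<open>\<langle>a x, y\<rangle>\<close> and \<open>\<langle>x, a y\<rangle>\<close> are double sums of this kernel over the shifted pairs
  \<open>(\<beta> + \<alpha>, \<alpha>)\<close>; the second after the substitution \<open>\<alpha> \<mapsto> -\<alpha>\<close>, where \<open>a\<^sup>* = -a\<close> produces
  the opposite sign.
\<close>

definition lmult_kernel where
  "lmult_kernel x y p = frob_inner (conv_term x (fst p) (snd p)) (y (fst p))"

lemma lmult_kernel_shift:
  "lmult_kernel x y (\<beta> + \<alpha>, \<alpha>) = cnj (omega \<theta> N \<alpha> \<beta>) * frob_inner (x \<beta>) (madj (a \<alpha>) ** y (\<beta> + \<alpha>))"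
  by (simp add: lmult_kernel_def conv_term_def frob_inner_mscale_left frob_inner_matrix_mult_left)

lemma summable_lmult_kernel:
  assumes x: "x \<in> ell2 N" and y: "y \<in> ell2 N"
  shows "lmult_kernel x y summable_on Zn N \<times> Zn N"
proof -
  define G H where "G = (\<lambda>(\<gamma>, \<alpha>). norm (a \<alpha>) * (norm (x (\<gamma> - \<alpha>)))\<^sup>2)"
    and "H = (\<lambda>(\<gamma>, \<alpha>). (norm (y \<gamma>))\<^sup>2 * norm (a \<alpha>))"
  have H: "H summable_on Zn N \<times> Zn N"
    unfolding H_def by (rule summable_on_product_nonneg[OF ell2_summable[OF y] a_l1]) auto
  have "norm (lmult_kernel x y (\<gamma>, \<alpha>)) \<le> (G (\<gamma>, \<alpha>) + H (\<gamma>, \<alpha>)) / 2" for \<gamma> \<alpha>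
  proof -
    define s t where "s = sqrt (norm (a \<alpha>)) * norm (x (\<gamma> - \<alpha>))" and "t = sqrt (norm (a \<alpha>)) * norm (y \<gamma>)"
    have "norm (lmult_kernel x y (\<gamma>, \<alpha>)) \<le> norm (conv_term x \<gamma> \<alpha>) * norm (y \<gamma>)"
      unfolding lmult_kernel_def by (simp add: norm_frob_inner_le)
    also have "\<dots> \<le> norm (a \<alpha>) * norm (x (\<gamma> - \<alpha>)) * norm (y \<gamma>)"
      by (rule mult_right_mono[OF norm_conv_term_le norm_ge_zero])
    also have "\<dots> = s * t" by (simp add: s_def t_def)
    also have "\<dots> \<le> (s\<^sup>2 + t\<^sup>2) / 2" using sum_squares_bound[of s t] by simp
    also have "\<dots> = (G (\<gamma>, \<alpha>) + H (\<gamma>, \<alpha>)) / 2"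
      by (simp add: G_def H_def s_def t_def power_mult_distrib)
    finally show ?thesis .
  qed
  then have "(\<lambda>p. norm (lmult_kernel x y p)) summable_on Zn N \<times> Zn N"
    by (intro Infinite_Sum.abs_summable_on_comparison_test'[OF summable_on_cmult_left[OF
          summable_on_add[OF summable_shifted_weight[OF x, folded G_def] H], of "1/2"]]) auto
  then show ?thesis by (rule abs_summable_summable)
qed

lemma ell2_inner_lmult_left:
  assumes x: "x \<in> ell2 N" and y: "y \<in> ell2 N"
  shows "ell2_inner N (lmult x) y
    = infsum (\<lambda>\<beta>. infsum (\<lambda>\<alpha>. lmult_kernel x y (\<beta> + \<alpha>, \<alpha>)) (Zn N)) (Zn N)"
proof -
  note summable = summable_lmult_kernel[OF x y]
  have shifted: "(\<lambda>(\<beta>, \<alpha>). lmult_kernel x y (\<beta> + \<alpha>, \<alpha>)) summable_on Zn N \<times> Zn N"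
    using summable_on_reindex_bij_betw[OF bij_betw_shift_Zn, of "lmult_kernel x y" N] summable
    by (simp add: case_prod_unfold)
  have "ell2_inner N (lmult x) y
      = infsum (\<lambda>\<gamma>. infsum (\<lambda>\<alpha>. lmult_kernel x y (\<gamma>, \<alpha>)) (Zn N)) (Zn N)"
    unfolding ell2_inner_def
    by (rule infsum_cong)
       (simp add: lmult_eq lmult_kernel_def
         infsum_bounded_linear[OF bounded_linear_frob_inner_left summable_conv_term(2)[OF x]])
  also have "\<dots> = infsum (lmult_kernel x y) (Zn N \<times> Zn N)"
    using infsum_Sigma_banach[of "lmult_kernel x y" "Zn N" "\<lambda>_. Zn N"] summable by simp
  also have "\<dots> = infsum (\<lambda>(\<beta>, \<alpha>). lmult_kernel x y (\<beta> + \<alpha>, \<alpha>)) (Zn N \<times> Zn N)"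
    using infsum_reindex_bij_betw[OF bij_betw_shift_Zn, of "lmult_kernel x y" N]
    by (simp add: case_prod_unfold)
  also have "\<dots> = infsum (\<lambda>\<beta>. infsum (\<lambda>\<alpha>. lmult_kernel x y (\<beta> + \<alpha>, \<alpha>)) (Zn N)) (Zn N)"
    using infsum_Sigma_banach[OF shifted] by simp
  finally show ?thesis .
qed

lemma frob_inner_lmult_right:
  assumes x: "x \<in> ell2 N" and y: "y \<in> ell2 N" and \<beta>: "\<beta> \<in> Zn N"
  shows "frob_inner (x \<beta>) (lmult y \<beta>) = - infsum (\<lambda>\<alpha>. lmult_kernel x y (\<beta> + \<alpha>, \<alpha>)) (Zn N)"
proof -
  have "frob_inner (x \<beta>) (lmult y \<beta>) = infsum (\<lambda>\<alpha>. frob_inner (x \<beta>) (conv_term y \<beta> \<alpha>)) (Zn N)"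
    using \<beta> summable_conv_term(2)[OF y \<beta>]
    by (simp add: lmult_eq infsum_bounded_linear[OF bounded_linear_frob_inner_right])
  also have "\<dots> = infsum (\<lambda>\<alpha>. frob_inner (x \<beta>) (conv_term y \<beta> (- \<alpha>))) (Zn N)"
    by (rule infsum_reindex_bij_betw[OF bij_betw_uminus_Zn, symmetric])
  also have "\<dots> = infsum (\<lambda>\<alpha>. - lmult_kernel x y (\<beta> + \<alpha>, \<alpha>)) (Zn N)"
  proof (rule infsum_cong)
    fix \<alpha> assume \<alpha>: "\<alpha> \<in> Zn N"
    have "frob_inner (x \<beta>) (conv_term y \<beta> (- \<alpha>))
        = omega \<theta> N (- \<alpha>) (\<beta> + \<alpha>) * (- cnj (omega \<theta> N \<alpha> (- \<alpha>)))
            * frob_inner (x \<beta>) (madj (a \<alpha>) ** y (\<beta> + \<alpha>))"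
      by (simp add: conv_term_def a_uminus[OF \<alpha>] frob_inner_mscale_right diff_minus_eq_add
          flip: mscale_matrix_mult_left)
    then show "frob_inner (x \<beta>) (conv_term y \<beta> (- \<alpha>)) = - lmult_kernel x y (\<beta> + \<alpha>, \<alpha>)"
      using omega_inversion_phase[of \<theta> N \<alpha> \<beta>] by (simp add: lmult_kernel_shift)
  qed
  finally show ?thesis by (simp add: infsum_uminus)
qed

lemma ell2_inner_lmult_right:
  assumes x: "x \<in> ell2 N" and y: "y \<in> ell2 N"
  shows "ell2_inner N x (lmult y)
    = - infsum (\<lambda>\<beta>. infsum (\<lambda>\<alpha>. lmult_kernel x y (\<beta> + \<alpha>, \<alpha>)) (Zn N)) (Zn N)"
proof -
  have "ell2_inner N x (lmult y)
      = infsum (\<lambda>\<beta>. - infsum (\<lambda>\<alpha>. lmult_kernel x y (\<beta> + \<alpha>, \<alpha>)) (Zn N)) (Zn N)"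
    unfolding ell2_inner_def by (rule infsum_cong) (rule frob_inner_lmult_right[OF x y])
  then show ?thesis by (simp add: infsum_uminus)
qed

lemma hs_ip_lmult_skew:
  assumes "x \<in> ell2 N" "y \<in> ell2 N"
  shows "hs_ip N (lmult x) y = - hs_ip N x (lmult y)"
  using assms by (simp add: hs_ip_eq ell2_inner_lmult_left ell2_inner_lmult_right)

end

section \<open>Smooth elements are summable\<close>

lemma summable_on_inverse_square_nat: "(\<lambda>n::nat. 1 / (1 + real n)\<^sup>2) summable_on UNIV"
proof -
  have "summable (\<lambda>n. inverse (real (Suc n) ^ 2))"
    using inverse_power_summable[of 2, where 'a=real] by (subst summable_Suc_iff) simp
  then show ?thesis
    by (intro summable_nonneg_imp_summable_on) (simp_all add: inverse_eq_divide add.commute)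
qed

lemma summable_on_inverse_square_int: "(\<lambda>j::int. 1 / (1 + \<bar>real_of_int j\<bar>)\<^sup>2) summable_on UNIV"
proof -
  let ?h = "\<lambda>j::int. 1 / (1 + \<bar>real_of_int j\<bar>)\<^sup>2"
  have UNIV_int: "(UNIV :: int set) = range int \<union> range (\<lambda>n. - int n - 1)"
  proof -
    have "j \<in> range int \<union> range (\<lambda>n. - int n - 1)" for j :: int
    proof (cases "j \<ge> 0")
      case False
      then have "j = - int (nat (- j - 1)) - 1" by simp
      then show ?thesis by blast
    qed (metis UnI1 nonneg_int_cases rangeI)
    then show ?thesis by blast
  qed
  have nonneg: "?h summable_on range int"
    by (subst summable_on_reindex) (auto simp: o_def summable_on_inverse_square_nat)
  have neg: "?h summable_on range (\<lambda>n. - int n - 1)"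
  proof (subst summable_on_reindex)
    show "(?h \<circ> (\<lambda>n. - int n - 1)) summable_on UNIV"
    proof (rule summable_on_comparison_test[OF summable_on_inverse_square_nat])
      fix n :: nat
      have "(1 + real n)\<^sup>2 \<le> (1 + \<bar>real_of_int (- int n - 1)\<bar>)\<^sup>2" by (simp add: power_mono)
      then show "(?h \<circ> (\<lambda>n. - int n - 1)) n \<le> 1 / (1 + real n)\<^sup>2"
        by (simp add: frac_le)
    qed simp
  qed (auto simp: inj_on_def)
  have "range int \<inter> range (\<lambda>n. - int n - 1) = {}" by auto
  then show ?thesis
    using summable_on_Un_disjoint[OF nonneg neg] UNIV_int by simp
qed

lemma summable_on_inverse_square_Zn:
  "(\<lambda>\<alpha>. \<Prod>k<N. 1 / (1 + \<bar>real_of_int (\<alpha> k)\<bar>)\<^sup>2) summable_on Zn N"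
proof (induction N)
  case 0
  have "Zn 0 = {0}" by (auto simp: Zn_def)
  then show ?case by simp
next
  case (Suc N)
  let ?P = "\<lambda>N \<alpha>. \<Prod>k<N. 1 / (1 + \<bar>real_of_int (\<alpha> k)\<bar>)\<^sup>2"
  have bij: "bij_betw (\<lambda>(\<beta>, j). \<beta>(N := j)) (Zn N \<times> UNIV) (Zn (Suc N))"
    by (rule bij_betwI[where g="\<lambda>\<alpha>. (\<alpha>(N := 0), \<alpha> N)"]) (auto simp: Zn_def fun_eq_iff)
  have "(\<lambda>(\<beta>, j). ?P N \<beta> * (1 / (1 + \<bar>real_of_int j\<bar>)\<^sup>2)) summable_on Zn N \<times> UNIV"
    by (rule summable_on_product_nonneg[OF Suc.IH summable_on_inverse_square_int])
       (auto intro: prod_nonneg)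
  moreover have "?P (Suc N) (\<beta>(N := j)) = ?P N \<beta> * (1 / (1 + \<bar>real_of_int j\<bar>)\<^sup>2)" for \<beta> j
    by (simp add: prod.lessThan_Suc)
  ultimately show ?case
    using summable_on_reindex_bij_betw[OF bij, of "?P (Suc N)"] by (simp add: case_prod_unfold)
qed

lemma smooth_vanishes: "x \<in> smooth N \<Longrightarrow> \<alpha> \<notin> Zn N \<Longrightarrow> x \<alpha> = 0"
  by (simp add: smooth_def)

lemma smooth_l1:
  assumes a: "a \<in> smooth N"
  shows "(\<lambda>\<alpha>. norm (a \<alpha>)) summable_on Zn N"
proof -
  obtain C where C: "\<forall>\<alpha>\<in>Zn N. (1 + (\<Sum>k<N. \<bar>real_of_int (\<alpha> k)\<bar>)) ^ (2 * N) * norm (a \<alpha>) \<le> C"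
    using a unfolding smooth_def by blast
  have "norm (a \<alpha>) \<le> C * (\<Prod>k<N. 1 / (1 + \<bar>real_of_int (\<alpha> k)\<bar>)\<^sup>2)" if \<alpha>: "\<alpha> \<in> Zn N" for \<alpha>
  proof -
    define s where "s = (\<Sum>k<N. \<bar>real_of_int (\<alpha> k)\<bar>)"
    have "(\<Prod>k<N. (1 + \<bar>real_of_int (\<alpha> k)\<bar>)\<^sup>2) \<le> (\<Prod>k<N. (1 + s)\<^sup>2)"
      unfolding s_def by (intro prod_mono conjI power_mono) (auto intro: member_le_sum)
    also have "\<dots> = (1 + s) ^ (2 * N)" by (simp add: power_mult)
    finally have "(\<Prod>k<N. (1 + \<bar>real_of_int (\<alpha> k)\<bar>)\<^sup>2) * norm (a \<alpha>) \<le> C"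
      using C \<alpha> mult_right_mono[OF _ norm_ge_zero] unfolding s_def by (meson order_trans)
    moreover have "(\<Prod>k<N. (1 + \<bar>real_of_int (\<alpha> k)\<bar>)\<^sup>2) > 0" by (intro prod_pos) auto
    ultimately show ?thesis by (simp add: prod_dividef field_simps)
  qed
  then show ?thesis
    by (intro summable_on_comparison_test[OF summable_on_cmult_right[OF summable_on_inverse_square_Zn, of C]])
       auto
qed

section \<open>Connections\<close>

definition tw_one :: "'n::finite coeffs" where
  "tw_one = (\<lambda>\<alpha>. if \<alpha> = 0 then mat 1 else 0)"

lemma tw_one_smooth: "(tw_one :: 'n::finite coeffs) \<in> smooth N"
  unfolding smooth_def
proof (intro CollectI conjI allI impI)
  show "\<exists>C. \<forall>\<alpha>\<in>Zn N. (1 + (\<Sum>k<N. \<bar>real_of_int (\<alpha> k)\<bar>)) ^ p * norm ((tw_one :: 'n coeffs) \<alpha>) \<le> C" for p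
    by (rule exI[of _ "norm (mat 1 :: complex^'n^'n)"]) (auto simp: tw_one_def)
qed (auto simp: tw_one_def Zn_def)

lemma tw_mult_one_left:
  assumes "\<And>\<alpha>. \<alpha> \<notin> Zn N \<Longrightarrow> x \<alpha> = 0"
  shows "tw_mult \<theta> N tw_one x = x"
proof
  fix \<gamma>
  have "infsum (\<lambda>\<alpha>. mscale (omega \<theta> N \<alpha> (\<gamma> - \<alpha>)) (tw_one \<alpha> ** x (\<gamma> - \<alpha>))) (Zn N)
      = infsum (\<lambda>\<alpha>. mscale (omega \<theta> N \<alpha> (\<gamma> - \<alpha>)) (tw_one \<alpha> ** x (\<gamma> - \<alpha>))) {0}"
    by (rule infsum_cong_neutral) (auto simp: tw_one_def Zn_def)
  then show "tw_mult \<theta> N tw_one x \<gamma> = x \<gamma>"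
    using assms by (simp add: tw_mult_def tw_one_def)
qed

lemma tw_mult_one_right:
  assumes "\<And>\<alpha>. \<alpha> \<notin> Zn N \<Longrightarrow> x \<alpha> = 0"
  shows "tw_mult \<theta> N x tw_one = x"
proof
  fix \<gamma>
  show "tw_mult \<theta> N x tw_one \<gamma> = x \<gamma>"
  proof (cases "\<gamma> \<in> Zn N")
    case True
    have "infsum (\<lambda>\<alpha>. mscale (omega \<theta> N \<alpha> (\<gamma> - \<alpha>)) (x \<alpha> ** tw_one (\<gamma> - \<alpha>))) (Zn N)
        = infsum (\<lambda>\<alpha>. mscale (omega \<theta> N \<alpha> (\<gamma> - \<alpha>)) (x \<alpha> ** tw_one (\<gamma> - \<alpha>))) {\<gamma>}"
      by (rule infsum_cong_neutral) (use True in \<open>auto simp: tw_one_def\<close>)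
    then show ?thesis using True by (simp add: tw_mult_def tw_one_def)
  qed (simp add: tw_mult_def assms)
qed

lemma tw_star_one: "tw_star \<theta> N tw_one = tw_one"
proof
  fix \<alpha>
  show "tw_star \<theta> N tw_one \<alpha> = tw_one \<alpha>"
    by (cases "\<alpha> = 0") (simp_all add: tw_star_def tw_one_def Zn_def)
qed

lemma deriv_one: "deriv k tw_one = (\<lambda>_. 0)"
  by (auto simp: deriv_def tw_one_def fun_eq_iff mscale_def vec_eq_iff)

lemma connection_form_smooth:
  "is_connection \<theta> N nab \<Longrightarrow> k < N \<Longrightarrow> nab k tw_one \<in> smooth N"
  using tw_one_smooth unfolding is_connection_def by blast

lemma connection_eq_mult_plus_deriv:
  assumes "is_connection \<theta> N nab" "k < N" "x \<in> smooth N"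
  shows "nab k x = cadd (tw_mult \<theta> N (nab k tw_one) x) (deriv k x)"
proof -
  have "nab k (tw_mult \<theta> N tw_one x)
      = cadd (tw_mult \<theta> N (nab k tw_one) x) (tw_mult \<theta> N tw_one (deriv k x))"
    using assms tw_one_smooth unfolding is_connection_def by blast
  then show ?thesis
    using smooth_vanishes[OF assms(3)] by (simp add: tw_mult_one_left deriv_def)
qed

lemma connection_form_skew_hermitian:
  assumes "is_connection \<theta> N nab" "is_compatible \<theta> N nab" "k < N"
  shows "tw_star \<theta> N (nab k tw_one) \<alpha> = - nab k tw_one \<alpha>"
proof -
  define a where "a = nab k tw_one"
  have a: "a \<in> smooth N"
    unfolding a_def by (rule connection_form_smooth[OF assms(1,3)])
  have star_a: "tw_star \<theta> N a \<beta> = 0" if "\<beta> \<notin> Zn N" for \<beta>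
    using that by (simp add: tw_star_def)
  have "cadd (tw_mult \<theta> N (tw_star \<theta> N a) tw_one) (tw_mult \<theta> N (tw_star \<theta> N tw_one) a)
      = deriv k (tw_mult \<theta> N (tw_star \<theta> N tw_one) tw_one)"
    using assms(2,3) tw_one_smooth unfolding a_def is_compatible_def by blast
  then have "cadd (tw_star \<theta> N a) a = (\<lambda>_. 0)"
    by (simp add: tw_star_one deriv_one tw_mult_one_right[OF star_a]
        tw_mult_one_left[OF smooth_vanishes[OF a]] tw_mult_one_left[OF smooth_vanishes[OF tw_one_smooth]])
  then show ?thesis by (simp add: a_def cadd_def fun_eq_iff eq_neg_iff_add_eq_0)
qed

theorem mainTheorem5:
  fixes \<theta> :: "nat \<Rightarrow> nat \<Rightarrow> real" and N :: nat
    and nab :: "nat \<Rightarrow> 'n::finite coeffs \<Rightarrow> 'n coeffs"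
  assumes "\<forall>k<N. \<forall>l<N. \<theta> k l = - \<theta> l k"
    and "is_connection \<theta> N nab"
    and "is_compatible \<theta> N nab"
  shows "\<forall>k<N. \<exists>T. (\<forall>x\<in>smooth N. T x = nab k x) \<and>
           skew_adjoint (ell2 N) (hs_ip N) (domD N k) T"
proof (intro allI impI)
  fix k assume k: "k < N"
  define a where "a = nab k tw_one"
  interpret skew_l1_multiplier \<theta> N a
    using smooth_l1[OF connection_form_smooth[OF assms(2) k]]
      connection_form_skew_hermitian[OF assms(2,3) k]
    by unfold_locales (simp_all add: a_def)
  show "\<exists>T. (\<forall>x\<in>smooth N. T x = nab k x) \<and> skew_adjoint (ell2 N) (hs_ip N) (domD N k) T"
  proof (intro exI conjI ballI)
    show "skew_adjoint (ell2 N) (hs_ip N) (domD N k) (\<lambda>x. cadd (lmult x) (deriv k x))"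
      by (rule skew_adjoint_add_skew_symmetric[OF skew_adjoint_deriv
            lmult_ell2 lmult_cadd lmult_csmul hs_ip_lmult_skew])
    show "cadd (lmult x) (deriv k x) = nab k x" if "x \<in> smooth N" for x
      using connection_eq_mult_plus_deriv[OF assms(2) k that] by (simp add: a_def)
  qed
qed

end
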